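(* Let $\alpha\approx 2.956$ be Otter's tree constant. Fix $0<\varepsilon<\alpha$. There exist $\Delta=\Delta(\varepsilon)\in\mathbb N$ and $\rho=\rho(\varepsilon)>0$ such that, for all sufficiently large $n$, the number of pairwise non-isomorphic trees on $n$ vertices with maximum degree at most $\Delta$ and at least $\rho n$ leaves is at least $(\alpha-\varepsilon)^n$.
   Context: Otter's tree constant $\alpha$ is the constant such that the number of pairwise non-isomorphic unlabelled trees on $n$ vertices is $(1+o(1))Cn^{-5/2}\alpha^n$ for an absolute constant $C$; equivalently, the number $a_k$ of non-isomorphic rooted unlabelled trees on $k$ vertices satisfies $a_k=(1+o(1))C'k^{-3/2}\alpha^k$, so $a_k^{1/k}\to\alpha$. Trees are counted up to graph isomorphism (unlabelled). *)

theory Defs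
  imports Complex_Main
begin

text \<open>Simple graphs on the vertex set {0..<n}, given by a set of 2-element edges.\<close>

definition vpairs :: "nat \<Rightarrow> nat set set" where
  "vpairs n = {{u, v} | u v. u < n \<and> v < n \<and> u \<noteq> v}"

definition connected_on :: "nat \<Rightarrow> nat set set \<Rightarrow> bool" where
  "connected_on n E \<longleftrightarrow>
     (\<forall>u<n. \<forall>v<n. (u, v) \<in> {(x, y). {x, y} \<in> E}\<^sup>*)"

text \<open>A tree: a connected graph on at least one vertex in which every edge is a bridge
  (i.e. a minimally connected graph, equivalently connected and acyclic).\<close>
definition is_tree :: "nat \<Rightarrow> nat set set \<Rightarrow> bool" where
  "is_tree n E \<longleftrightarrow> 1 \<le> n \<and> E \<subseteq> vpairs n \<and> connected_on n E \<and>
     (\<forall>e\<in>E. \<not> connected_on n (E - {e}))"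

definition degree :: "nat set set \<Rightarrow> nat \<Rightarrow> nat" where
  "degree E v = card {e\<in>E. v \<in> e}"

definition leaves :: "nat \<Rightarrow> nat set set \<Rightarrow> nat set" where
  "leaves n E = {v. v < n \<and> degree E v = 1}"

definition max_degree :: "nat \<Rightarrow> nat set set \<Rightarrow> nat" where
  "max_degree n E = Max (degree E ` {..<n})"

definition graph_iso :: "nat \<Rightarrow> nat set set set \<Rightarrow> (nat set set \<times> nat set set) set" where
  "graph_iso n A = {(E, E'). E \<in> A \<and> E' \<in> A \<and>
     (\<exists>f. bij_betw f {..<n} {..<n} \<and> E' = (\<lambda>e. f ` e) ` E)}"

definition unlabelled_trees :: "nat \<Rightarrow> (nat set set \<Rightarrow> bool) \<Rightarrow> nat" where
  "unlabelled_trees n P =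
     (let A = {E. is_tree n E \<and> P E} in card (A // graph_iso n A))"

definition rooted_iso :: "nat \<Rightarrow> (nat set set \<times> nat) set \<Rightarrow> ((nat set set \<times> nat) \<times> (nat set set \<times> nat)) set" where
  "rooted_iso n A = {((E, r), (E', r')). (E, r) \<in> A \<and> (E', r') \<in> A \<and>
     (\<exists>f. bij_betw f {..<n} {..<n} \<and> E' = (\<lambda>e. f ` e) ` E \<and> f r = r')}"

definition rooted_trees :: "nat \<Rightarrow> nat" where
  "rooted_trees k =
     (let A = {(E, r). is_tree k E \<and> r < k} in card (A // rooted_iso k A))"

end

theory Submission
  imports Defs
begin

text \<open>
  Fix a block size \<open>k\<close> with \<open>a\<^sub>k \<ge> \<beta>\<^sup>k\<close> for some \<open>\<beta>\<close> strictly between \<open>\<alpha> - \<epsilon>\<close>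
  and \<open>\<alpha>\<close>. For \<open>n = m (k + 2) + c\<close> with \<open>2 \<le> c \<le> k + 3\<close>, take a path (the spine)
  \<open>S\<^sub>0 \<dots> S\<^bsub>m-1\<^esub>\<close>, hang a pendant leaf and the root of a rooted tree \<open>T\<^sub>i\<close> on \<open>k\<close>
  vertices at every \<open>S\<^sub>i\<close>, and \<open>c\<close> further leaves at \<open>S\<^sub>0\<close>. This is a tree on \<open>n\<close>
  vertices with maximum degree at most \<open>2 k + 8\<close> and at least \<open>m + c \<ge> n / (k + 2)\<close> leaves.

  The tuple \<open>(T\<^sub>i)\<close> is determined up to rooted isomorphism by the tree: the spine vertices
  are exactly the vertices with two branches of at least \<open>k\<close> vertices each, and \<open>S\<^sub>0\<close> is
  the only one of degree at least 5, so an isomorphism fixes the spine pointwise and maps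
  \<open>T\<^sub>i\<close> onto \<open>T\<^sub>i'\<close>, root to root. Hence there are at least
  \<open>a\<^sub>k\<^sup>m \<ge> \<beta>\<^bsup>km\<^esup> \<ge> (\<alpha> - \<epsilon>)\<^sup>n\<close> such trees once \<open>k\<close> is large.
\<close>

section \<open>Graphs given by sets of edges\<close>

definition relabel :: "('a \<Rightarrow> 'b) \<Rightarrow> 'a set set \<Rightarrow> 'b set set" where
  "relabel f E = (\<lambda>e. f ` e) ` E"

definition edges_on :: "'a set \<Rightarrow> 'a set set \<Rightarrow> bool" where
  "edges_on W E \<longleftrightarrow> (\<forall>e\<in>E. \<exists>a b. a \<in> W \<and> b \<in> W \<and> a \<noteq> b \<and> e = {a, b})"

definition adj_avoiding :: "'a set set \<Rightarrow> 'a set \<Rightarrow> ('a \<times> 'a) set" where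
  "adj_avoiding E X = {(x, y). {x, y} \<in> E \<and> x \<notin> X \<and> y \<notin> X}"

abbreviation reach_avoiding :: "'a set set \<Rightarrow> 'a set \<Rightarrow> ('a \<times> 'a) set" where
  "reach_avoiding E X \<equiv> (adj_avoiding E X)\<^sup>*"

definition connected_in :: "'a set \<Rightarrow> 'a set set \<Rightarrow> bool" where
  "connected_in W E \<longleftrightarrow> (\<forall>u\<in>W. \<forall>v\<in>W. (u, v) \<in> reach_avoiding E {})"

definition deg :: "'a set set \<Rightarrow> 'a \<Rightarrow> nat" where
  "deg E v = card {e\<in>E. v \<in> e}"

definition branch :: "'a set set \<Rightarrow> 'a \<Rightarrow> 'a \<Rightarrow> 'a set" where
  "branch E v x = {y. (x, y) \<in> reach_avoiding E {v}}"

definition two_heavy_branches :: "'a set \<Rightarrow> nat \<Rightarrow> 'a set set \<Rightarrow> 'a \<Rightarrow> bool" where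
  "two_heavy_branches W k E v \<longleftrightarrow> v \<in> W \<and> (\<exists>x\<in>W. \<exists>y\<in>W. x \<noteq> v \<and> y \<noteq> v \<and>
     k \<le> card (branch E v x) \<and> k \<le> card (branch E v y) \<and> (x, y) \<notin> reach_avoiding E {v})"

lemma connected_on_iff_connected_in: "connected_on n E \<longleftrightarrow> connected_in {..<n} E"
  unfolding connected_on_def connected_in_def adj_avoiding_def Ball_def lessThan_iff by simp

lemma degree_eq_deg: "degree E v = deg E v"
  unfolding degree_def deg_def ..

lemma rtrancl_map:
  assumes "(x, y) \<in> R\<^sup>*" and "\<And>a b. (a, b) \<in> R \<Longrightarrow> (f a, f b) \<in> S"
  shows "(f x, f y) \<in> S\<^sup>*"
  using assms(1) by induction (use assms(2) in \<open>auto intro: rtrancl_into_rtrancl\<close>)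

lemma rtrancl_closed:
  assumes "(x, y) \<in> R\<^sup>*" "x \<in> L" "\<And>a b. (a, b) \<in> R \<Longrightarrow> a \<in> L \<Longrightarrow> b \<in> L"
  shows "y \<in> L"
  using assms(1) by induction (use assms in auto)

lemma reach_avoiding_sym: "(x, y) \<in> reach_avoiding E X \<Longrightarrow> (y, x) \<in> reach_avoiding E X"
proof (induction rule: rtrancl_induct)
  case (step y z)
  then have "(z, y) \<in> adj_avoiding E X" by (auto simp: adj_avoiding_def insert_commute)
  then show ?case using step.IH by (rule converse_rtrancl_into_rtrancl)
qed simp

lemma reach_avoiding_edge:
  "{x, y} \<in> E \<Longrightarrow> x \<notin> X \<Longrightarrow> y \<notin> X \<Longrightarrow> (x, y) \<in> reach_avoiding E X"
  unfolding adj_avoiding_def by auto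

lemma reach_avoiding_to_removed:
  assumes "(x, y) \<in> reach_avoiding E X" "y \<in> X"
  shows "x = y"
  using assms by (induction rule: converse_rtrancl_induct) (auto simp: adj_avoiding_def)

lemma not_connected_in_if_closed:
  assumes "x \<in> W" "y \<in> W" "x \<in> L" "y \<notin> L"
    and "\<And>a b. {a, b} \<in> E \<Longrightarrow> a \<in> L \<Longrightarrow> b \<in> L"
  shows "\<not> connected_in W E"
proof
  assume "connected_in W E"
  then have "(x, y) \<in> reach_avoiding E {}" using assms(1,2) unfolding connected_in_def by blast
  then have "y \<in> L" using assms(3)
    by (rule rtrancl_closed) (use assms(5) in \<open>auto simp: adj_avoiding_def\<close>)
  with assms(4) show False ..
qed

lemma deg_eq_card_neighbours:
  assumes "\<forall>e\<in>E. \<exists>a b. e = {a, b}"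
  shows "deg E v = card {u. {v, u} \<in> E}"
proof -
  have "bij_betw (\<lambda>u. {v, u}) {u. {v, u} \<in> E} {e\<in>E. v \<in> e}"
  proof (rule bij_betwI')
    fix e assume e: "e \<in> {e\<in>E. v \<in> e}"
    then obtain a b where "e = {a, b}" using assms by blast
    with e have "e = {v, if v = a then b else a}" by (auto simp: insert_commute)
    with e show "\<exists>u\<in>{u. {v, u} \<in> E}. e = {v, u}" by auto
  qed (auto simp: doubleton_eq_iff)
  then show ?thesis unfolding deg_def by (simp add: bij_betw_same_card)
qed

lemma edges_onD:
  assumes "edges_on W E" "{a, b} \<in> E"
  shows "a \<in> W" "b \<in> W"
proof -
  obtain c d where "c \<in> W" "d \<in> W" "{a, b} = {c, d}"
    using assms unfolding edges_on_def by blast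
  then show "a \<in> W" "b \<in> W" by (auto simp: doubleton_eq_iff)
qed

lemma edges_on_subset:
  assumes "edges_on W E" "e \<in> E" shows "e \<subseteq> W"
  using assms unfolding edges_on_def by auto

lemma edges_on_mono_edges: "edges_on W E \<Longrightarrow> F \<subseteq> E \<Longrightarrow> edges_on W F"
  unfolding edges_on_def by blast

lemma reach_avoiding_endpoint:
  assumes "(x, y) \<in> reach_avoiding E X" "edges_on W E"
  shows "y = x \<or> y \<in> W"
  using assms(1)
proof induction
  case (step y z)
  then have "{y, z} \<in> E" by (simp add: adj_avoiding_def)
  then show ?case using edges_onD(2)[OF assms(2)] by blast
qed simp

lemma branch_subset: "edges_on W E \<Longrightarrow> branch E v x \<subseteq> insert x W"
  unfolding branch_def using reach_avoiding_endpoint by fastforce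

lemma relabel_comp: "relabel g (relabel f E) = relabel (g \<circ> f) E"
  unfolding relabel_def by (auto simp: image_comp)

lemma relabel_cong:
  "(\<And>e x. e \<in> E \<Longrightarrow> x \<in> e \<Longrightarrow> f x = g x) \<Longrightarrow> relabel f E = relabel g E"
  unfolding relabel_def by (rule image_cong) (simp_all cong: image_cong)

lemma relabel_id: "relabel id E = E"
  unfolding relabel_def by simp

lemma edges_on_relabel:
  assumes "inj_on f W" "edges_on W E"
  shows "edges_on (f ` W) (relabel f E)"
  using assms unfolding edges_on_def relabel_def inj_on_def by fastforce

lemma relabel_edge_iff:
  assumes "inj_on f W" "edges_on W E" "a \<in> W" "b \<in> W"
  shows "{f a, f b} \<in> relabel f E \<longleftrightarrow> {a, b} \<in> E"
proof
  assume "{f a, f b} \<in> relabel f E"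
  then obtain e where e: "e \<in> E" "f ` e = {f a, f b}" unfolding relabel_def by blast
  then obtain c d where cd: "c \<in> W" "d \<in> W" "e = {c, d}"
    using assms(2) unfolding edges_on_def by blast
  then have "(f c = f a \<and> f d = f b) \<or> (f c = f b \<and> f d = f a)"
    using e(2) by (simp add: doubleton_eq_iff)
  then have "(c = a \<and> d = b) \<or> (c = b \<and> d = a)"
    using assms(1,3,4) cd(1,2) by (meson inj_onD)
  then have "e = {a, b}" using cd(3) by (metis insert_commute)
  with e(1) show "{a, b} \<in> E" by simp
next
  assume "{a, b} \<in> E"
  then show "{f a, f b} \<in> relabel f E"
    unfolding relabel_def by (metis image_empty image_eqI image_insert)
qed

lemma relabel_inv_into:
  assumes "inj_on f W" "edges_on W E"
  shows "relabel (inv_into W f) (relabel f E) = E"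
proof -
  have "relabel (inv_into W f \<circ> f) E = relabel id E"
    by (rule relabel_cong) (use assms edges_on_subset in fastforce)
  then show ?thesis by (simp add: relabel_comp relabel_id)
qed

lemma relabel_eqI:
  assumes "bij_betw f W W'" "edges_on W E" "edges_on W' E'"
    and "\<And>a b. a \<in> W \<Longrightarrow> b \<in> W \<Longrightarrow> {f a, f b} \<in> E' \<longleftrightarrow> {a, b} \<in> E"
  shows "E' = relabel f E"
proof
  have W': "W' = f ` W" using assms(1) by (simp add: bij_betw_def)
  show "E' \<subseteq> relabel f E"
  proof
    fix e assume e: "e \<in> E'"
    then obtain a' b' where "a' \<in> W'" "b' \<in> W'" and e_eq: "e = {a', b'}"
      using assms(3) unfolding edges_on_def by blast
    then have "a' \<in> f ` W" "b' \<in> f ` W" using W' by simp_all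
    then obtain a b where ab: "a \<in> W" "b \<in> W" "a' = f a" "b' = f b" by (elim imageE)
    then have "{a, b} \<in> E" using assms(4) e e_eq by simp
    moreover have "e = f ` {a, b}" using e_eq ab(3,4) by simp
    ultimately show "e \<in> relabel f E" unfolding relabel_def by (rule rev_image_eqI)
  qed
  show "relabel f E \<subseteq> E'"
  proof
    fix e assume "e \<in> relabel f E"
    then obtain e0 where e0: "e0 \<in> E" "e = f ` e0" unfolding relabel_def by blast
    moreover obtain a b where "a \<in> W" "b \<in> W" "e0 = {a, b}"
      using assms(2) e0(1) unfolding edges_on_def by blast
    ultimately show "e \<in> E'" using assms(4) by simp
  qed
qed

lemma reach_avoiding_relabel:
  assumes "inj_on f W" "edges_on W E" "X \<subseteq> W" "(x, y) \<in> reach_avoiding E X"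
  shows "(f x, f y) \<in> reach_avoiding (relabel f E) (f ` X)"
proof (rule rtrancl_map[OF assms(4)])
  fix a b assume "(a, b) \<in> adj_avoiding E X"
  then have e: "{a, b} \<in> E" "a \<notin> X" "b \<notin> X" by (auto simp: adj_avoiding_def)
  have "f z \<notin> f ` X" if "z \<in> {a, b}" for z
  proof -
    have "z \<in> W" "z \<notin> X" using that e edges_onD[OF assms(2) e(1)] by auto
    then show ?thesis using assms(1,3) by (metis inj_on_image_mem_iff)
  qed
  moreover have "{f a, f b} \<in> relabel f E"
    using e(1) unfolding relabel_def by (metis image_empty image_eqI image_insert)
  ultimately show "(f a, f b) \<in> adj_avoiding (relabel f E) (f ` X)"
    by (simp add: adj_avoiding_def)
qed

lemma reach_avoiding_relabel_iff:
  assumes "inj_on f W" "edges_on W E" "X \<subseteq> W" "x \<in> W" "y \<in> W"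
  shows "(f x, f y) \<in> reach_avoiding (relabel f E) (f ` X) \<longleftrightarrow> (x, y) \<in> reach_avoiding E X"
proof
  let ?g = "inv_into W f"
  assume "(f x, f y) \<in> reach_avoiding (relabel f E) (f ` X)"
  then have "(?g (f x), ?g (f y)) \<in> reach_avoiding (relabel ?g (relabel f E)) (?g ` f ` X)"
    using assms(3)
    by (intro reach_avoiding_relabel[OF inj_on_inv_into edges_on_relabel[OF assms(1,2)]]) auto
  moreover have "?g ` f ` X = X" using assms(1,3) by (meson inv_into_image_cancel)
  ultimately show "(x, y) \<in> reach_avoiding E X"
    using assms(1,4,5) relabel_inv_into[OF assms(1,2)] by simp
qed (rule reach_avoiding_relabel[OF assms(1-3)])

lemma branch_relabel:
  assumes "inj_on f W" "edges_on W E" "v \<in> W" "x \<in> W"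
  shows "branch (relabel f E) (f v) (f x) = f ` branch E v x"
proof
  have vW: "{v} \<subseteq> W" using assms(3) by simp
  show "branch (relabel f E) (f v) (f x) \<subseteq> f ` branch E v x"
  proof
    fix y' assume "y' \<in> branch (relabel f E) (f v) (f x)"
    then have y': "(f x, y') \<in> reach_avoiding (relabel f E) (f ` {v})" unfolding branch_def by simp
    then have "y' = f x \<or> y' \<in> f ` W"
      using reach_avoiding_endpoint[OF _ edges_on_relabel[OF assms(1,2)]] by blast
    then obtain y where "y \<in> W" "y' = f y" using assms(4) by blast
    with y' show "y' \<in> f ` branch E v x"
      using reach_avoiding_relabel_iff[OF assms(1,2) vW assms(4)] unfolding branch_def by auto
  qed
  show "f ` branch E v x \<subseteq> branch (relabel f E) (f v) (f x)"
    using reach_avoiding_relabel[OF assms(1,2) vW] unfolding branch_def by auto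
qed

lemma card_branch_relabel:
  assumes "inj_on f W" "edges_on W E" "v \<in> W" "x \<in> W"
  shows "card (branch (relabel f E) (f v) (f x)) = card (branch E v x)"
proof -
  have "branch E v x \<subseteq> W" using branch_subset[OF assms(2)] assms(4) by blast
  then have "inj_on f (branch E v x)" using assms(1) inj_on_subset by blast
  then show ?thesis unfolding branch_relabel[OF assms] by (rule card_image)
qed

lemma deg_relabel:
  assumes "inj_on f W" "edges_on W E" "v \<in> W"
  shows "deg (relabel f E) (f v) = deg E v"
proof -
  have sub: "\<And>e. e \<in> E \<Longrightarrow> e \<subseteq> W" using edges_on_subset[OF assms(2)] by blast
  have "f v \<in> f ` e \<longleftrightarrow> v \<in> e" if "e \<in> E" for e
    using sub[OF that] assms(1,3) by (metis inj_on_image_mem_iff)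
  then have "{e'\<in>relabel f E. f v \<in> e'} = (\<lambda>e. f ` e) ` {e\<in>E. v \<in> e}"
    unfolding relabel_def by blast
  moreover have "inj_on (\<lambda>e. f ` e) {e\<in>E. v \<in> e}"
  proof (rule inj_onI)
    fix x y assume "x \<in> {e\<in>E. v \<in> e}" "y \<in> {e\<in>E. v \<in> e}" "f ` x = f ` y"
    then show "x = y" using sub assms(1)
      by (metis (no_types, lifting) inj_on_image_eq_iff mem_Collect_eq)
  qed
  ultimately show ?thesis unfolding deg_def by (simp add: card_image)
qed

lemma two_heavy_branches_relabel:
  assumes "inj_on f W" "edges_on W E" "v \<in> W"
  shows "two_heavy_branches (f ` W) k (relabel f E) (f v) \<longleftrightarrow> two_heavy_branches W k E v"
proof -
  have "{v} \<subseteq> W" using assms(3) by simp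
  note transport = card_branch_relabel[OF assms(1-3)] reach_avoiding_relabel_iff[OF assms(1,2) this]
  have "f x \<noteq> f v \<longleftrightarrow> x \<noteq> v" if "x \<in> W" for x using that assms(1,3) by (meson inj_onD)
  then show ?thesis unfolding two_heavy_branches_def using assms(3) transport by auto
qed

lemma connected_in_relabel:
  assumes "inj_on f W" "edges_on W E"
  shows "connected_in (f ` W) (relabel f E) \<longleftrightarrow> connected_in W E"
  using reach_avoiding_relabel_iff[OF assms, of "{}"] unfolding connected_in_def by auto

lemma tree_edge:
  assumes "is_tree k E" "{x, y} \<in> E"
  shows "x < k" "y < k" "x \<noteq> y"
proof -
  have "{x, y} \<in> vpairs k" using assms unfolding is_tree_def by blast
  then obtain u v where "{x, y} = {u, v}" "u < k" "v < k" "u \<noteq> v" unfolding vpairs_def by blast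
  then show "x < k" "y < k" "x \<noteq> y" by (auto simp: doubleton_eq_iff)
qed

lemma edges_on_if_subset_vpairs: "E \<subseteq> vpairs n \<Longrightarrow> edges_on {..<n} E"
  unfolding edges_on_def vpairs_def by blast

lemma not_connected_in_unreachable:
  assumes "\<not> connected_in W E" "r \<in> W"
  obtains z where "z \<in> W" "(r, z) \<notin> reach_avoiding E {}"
proof -
  obtain u w where "u \<in> W" "w \<in> W" "(u, w) \<notin> reach_avoiding E {}"
    using assms(1) unfolding connected_in_def by blast
  then show thesis
    using that rtrancl_trans[OF reach_avoiding_sym, of r u E "{}" w] by blast
qed

lemma relabel_Diff_singleton:
  assumes "inj_on f W" "edges_on W E" "e \<in> E"
  shows "relabel f E - {f ` e} = relabel f (E - {e})"
proof -
  have "e1 = e2" if "e1 \<in> E" "e2 \<in> E" "f ` e1 = f ` e2" for e1 e2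
    using that edges_on_subset[OF assms(2)] assms(1) by (meson inj_on_image_eq_iff)
  then show ?thesis unfolding relabel_def using assms(3) by blast
qed

lemma is_tree_relabelI:
  assumes f: "bij_betw f W {..<n}" and E: "edges_on W E" and "W \<noteq> {}"
    and conn: "connected_in W E" and bridges: "\<And>e. e \<in> E \<Longrightarrow> \<not> connected_in W (E - {e})"
  shows "is_tree n (relabel f E)"
  unfolding is_tree_def
proof (intro conjI ballI)
  have inj: "inj_on f W" and img: "f ` W = {..<n}" using f by (simp_all add: bij_betw_def)
  obtain w where "w \<in> W" using \<open>W \<noteq> {}\<close> by blast
  then have "f w < n" using img by blast
  then show "1 \<le> n" by simp
  have "edges_on {..<n} (relabel f E)" using edges_on_relabel[OF inj E] img by simp
  then show "relabel f E \<subseteq> vpairs n" unfolding edges_on_def vpairs_def by fast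
  show "connected_on n (relabel f E)"
    using connected_in_relabel[OF inj E] conn img by (simp add: connected_on_iff_connected_in)
  fix e' assume "e' \<in> relabel f E"
  then obtain e where e: "e \<in> E" "e' = f ` e" unfolding relabel_def by blast
  have "edges_on W (E - {e})" using E by (rule edges_on_mono_edges) blast
  then have "\<not> connected_in {..<n} (relabel f (E - {e}))"
    using connected_in_relabel[OF inj] bridges[OF e(1)] img by metis
  then show "\<not> connected_on n (relabel f E - {e'})"
    using relabel_Diff_singleton[OF inj E e(1)] e(2) by (simp add: connected_on_iff_connected_in)
qed

lemma card_le_4: "card {w, x, y, z} \<le> 4"
  using card_length[of "[w, x, y, z]"] by simp

section \<open>Gluing rooted trees along a spine\<close>

text \<open>\<open>Spine i\<close> is \<open>S\<^sub>i\<close>, \<open>Pendant i\<close> its pendant leaf, \<open>Piece i x\<close> the vertex \<open>x\<close> of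
  \<open>T\<^sub>i\<close>, and \<open>Extra j\<close> the \<open>j\<close>-th additional leaf at \<open>S\<^sub>0\<close>.\<close>

datatype vtx = Spine nat | Pendant nat | Piece nat nat | Extra nat

locale spine_gluing =
  fixes k m c :: nat and trees :: "nat \<Rightarrow> nat set set \<times> nat"
  assumes k_ge_2: "2 \<le> k" and m_ge_2: "2 \<le> m" and c_ge_2: "2 \<le> c"
    and is_tree_tedges: "\<And>i. i < m \<Longrightarrow> is_tree k (fst (trees i))"
    and troot_less: "\<And>i. i < m \<Longrightarrow> snd (trees i) < k"
begin

abbreviation tedges where "tedges i \<equiv> fst (trees i)"
abbreviation troot where "troot i \<equiv> snd (trees i)"

definition verts :: "vtx set" where
  "verts = Spine ` {..<m} \<union> Pendant ` {..<m} \<union> (\<lambda>(i, x). Piece i x) ` ({..<m} \<times> {..<k}) \<union>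
     Extra ` {..<c}"

definition glued :: "vtx set set" where
  "glued = {{Spine i, Spine (Suc i)} | i. Suc i < m} \<union> {{Spine i, Pendant i} | i. i < m} \<union>
     {{Spine i, Piece i (troot i)} | i. i < m} \<union>
     {{Piece i x, Piece i y} | i x y. i < m \<and> {x, y} \<in> tedges i} \<union>
     {{Spine 0, Extra j} | j. j < c}"

lemma verts_simps [simp]:
  "Spine i \<in> verts \<longleftrightarrow> i < m" "Pendant i \<in> verts \<longleftrightarrow> i < m"
  "Piece i x \<in> verts \<longleftrightarrow> i < m \<and> x < k" "Extra j \<in> verts \<longleftrightarrow> j < c"
  unfolding verts_def by auto

lemma finite_verts: "finite verts"
  unfolding verts_def by auto

lemma tedges_bounds: "i < m \<Longrightarrow> {x, y} \<in> tedges i \<Longrightarrow> x < k \<and> y < k \<and> x \<noteq> y"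
  using tree_edge[OF is_tree_tedges] by blast

lemma glued_Spine_iff:
  "{Spine i, u} \<in> glued \<longleftrightarrow> (Suc i < m \<and> u = Spine (Suc i)) \<or> (\<exists>j. i = Suc j \<and> i < m \<and> u = Spine j) \<or>
     (i < m \<and> u = Pendant i) \<or> (i < m \<and> u = Piece i (troot i)) \<or> (i = 0 \<and> (\<exists>j<c. u = Extra j))"
  unfolding glued_def by (auto simp: doubleton_eq_iff)

lemma glued_Pendant_iff: "{Pendant i, u} \<in> glued \<longleftrightarrow> i < m \<and> u = Spine i"
  unfolding glued_def by (auto simp: doubleton_eq_iff)

lemma glued_Extra_iff: "{Extra j, u} \<in> glued \<longleftrightarrow> j < c \<and> u = Spine 0"
  unfolding glued_def by (auto simp: doubleton_eq_iff)

lemma glued_Piece_iff: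
  "{Piece i x, u} \<in> glued \<longleftrightarrow>
     (i < m \<and> x = troot i \<and> u = Spine i) \<or> (i < m \<and> (\<exists>y. {x, y} \<in> tedges i \<and> u = Piece i y))"
proof
  assume "{Piece i x, u} \<in> glued"
  then have "(i < m \<and> x = troot i \<and> u = Spine i) \<or>
      (\<exists>j a b. j < m \<and> {a, b} \<in> tedges j \<and> {Piece i x, u} = {Piece j a, Piece j b})"
    unfolding glued_def by (auto simp: doubleton_eq_iff)
  moreover have "i < m \<and> (\<exists>y. {x, y} \<in> tedges i \<and> u = Piece i y)"
    if "j < m" "{a, b} \<in> tedges j" "{Piece i x, u} = {Piece j a, Piece j b}" for j a b
    using that by (auto simp: doubleton_eq_iff insert_commute)
  ultimately show "(i < m \<and> x = troot i \<and> u = Spine i) \<or>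
      (i < m \<and> (\<exists>y. {x, y} \<in> tedges i \<and> u = Piece i y))"
    by blast
qed (auto simp: glued_def insert_commute)

lemma glued_Piece_Piece_iff: "i < m \<Longrightarrow> {Piece i x, Piece i y} \<in> glued \<longleftrightarrow> {x, y} \<in> tedges i"
  using glued_Piece_iff by auto

lemma glued_doubleton: "e \<in> glued \<Longrightarrow> \<exists>a b. e = {a, b}"
  unfolding glued_def by blast

lemma edges_on_glued: "edges_on verts glued"
  unfolding edges_on_def
proof
  fix e assume "e \<in> glued"
  then obtain a b where e: "e = {a, b}" using glued_doubleton by blast
  have "a \<in> verts \<and> b \<in> verts \<and> a \<noteq> b"
  proof (cases a)
    case (Spine i) then show ?thesis using \<open>e \<in> glued\<close> e glued_Spine_iff[of i b] troot_less m_ge_2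
      by auto
  next
    case (Pendant i) then show ?thesis using \<open>e \<in> glued\<close> e glued_Pendant_iff[of i b] by auto
  next
    case (Extra j) then show ?thesis using \<open>e \<in> glued\<close> e glued_Extra_iff[of j b] m_ge_2 by auto
  next
    case (Piece i x)
    then show ?thesis using \<open>e \<in> glued\<close> e glued_Piece_iff[of i x b] troot_less tedges_bounds by auto
  qed
  then show "\<exists>a b. a \<in> verts \<and> b \<in> verts \<and> a \<noteq> b \<and> e = {a, b}" using e by blast
qed

lemma spine_reach: "i < m \<Longrightarrow> (\<forall>j. Spine j \<notin> X) \<Longrightarrow> (Spine i, Spine 0) \<in> reach_avoiding glued X"
proof (induction i)
  case (Suc i)
  then have "(Spine (Suc i), Spine i) \<in> reach_avoiding glued X"
    by (simp add: reach_avoiding_edge glued_Spine_iff)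
  with Suc show ?case by (simp add: rtrancl_trans)
qed simp

lemma pendant_reach:
  assumes "i < m" "Pendant i \<notin> X" "\<forall>j. Spine j \<notin> X"
  shows "(Pendant i, Spine 0) \<in> reach_avoiding glued X"
proof -
  have "(Pendant i, Spine i) \<in> reach_avoiding glued X"
    using assms by (simp add: reach_avoiding_edge glued_Pendant_iff)
  then show ?thesis using spine_reach[OF assms(1,3)] by (rule rtrancl_trans)
qed

lemma extra_reach:
  "j < c \<Longrightarrow> Extra j \<notin> X \<Longrightarrow> (\<forall>j. Spine j \<notin> X) \<Longrightarrow> (Extra j, Spine 0) \<in> reach_avoiding glued X"
  using glued_Extra_iff by (simp add: reach_avoiding_edge)

lemma piece_reach:
  assumes "i < m" "x < k" "y < k" "\<forall>z. Piece i z \<notin> X"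
  shows "(Piece i x, Piece i y) \<in> reach_avoiding glued X"
proof -
  have "connected_on k (tedges i)" using is_tree_tedges[OF assms(1)] unfolding is_tree_def by blast
  then have "(x, y) \<in> {(a, b). {a, b} \<in> tedges i}\<^sup>*" using assms(2,3) unfolding connected_on_def
    by blast
  then show ?thesis
  proof (rule rtrancl_map)
    fix a b assume "(a, b) \<in> {(a, b). {a, b} \<in> tedges i}"
    then show "(Piece i a, Piece i b) \<in> adj_avoiding glued X"
      using glued_Piece_iff assms(1,4) by (auto simp: adj_avoiding_def)
  qed
qed

lemma root_spine_reach:
  "i < m \<Longrightarrow> Piece i (troot i) \<notin> X \<Longrightarrow> Spine i \<notin> X \<Longrightarrow>
     (Piece i (troot i), Spine i) \<in> reach_avoiding glued X"
  using glued_Piece_iff by (simp add: reach_avoiding_edge)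

lemma piece_spine_reach:
  assumes "i < m" "x < k" "\<forall>z. Piece i z \<notin> X" "\<forall>j. Spine j \<notin> X"
  shows "(Piece i x, Spine 0) \<in> reach_avoiding glued X"
proof -
  have "(Piece i x, Piece i (troot i)) \<in> reach_avoiding glued X"
    using piece_reach[OF assms(1,2) troot_less assms(3)] assms(1) .
  also have "(Piece i (troot i), Spine i) \<in> reach_avoiding glued X"
    using root_spine_reach assms by blast
  also have "(Spine i, Spine 0) \<in> reach_avoiding glued X"
    using spine_reach assms by blast
  finally show ?thesis .
qed

lemma reach_Spine_0: "x \<in> verts \<Longrightarrow> (x, Spine 0) \<in> reach_avoiding glued {}"
  by (cases x) (simp_all add: spine_reach pendant_reach extra_reach piece_spine_reach)

lemma connected_glued: "connected_in verts glued"
  unfolding connected_in_def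
proof (intro ballI)
  fix u v assume "u \<in> verts" "v \<in> verts"
  then show "(u, v) \<in> reach_avoiding glued {}"
    using rtrancl_trans[OF reach_Spine_0 reach_avoiding_sym[OF reach_Spine_0]] by blast
qed

lemma not_connected_minus_spine_edge:
  assumes "Suc i < m"
  shows "\<not> connected_in verts (glued - {{Spine i, Spine (Suc i)}})"
proof -
  define L where "L = {v. case v of Spine j \<Rightarrow> j \<le> i | Pendant j \<Rightarrow> j \<le> i
    | Piece j z \<Rightarrow> j \<le> i | Extra j \<Rightarrow> True}"
  show ?thesis
  proof (rule not_connected_in_if_closed[of "Spine 0" _ "Spine (Suc i)" L])
    fix a b assume ab: "{a, b} \<in> glued - {{Spine i, Spine (Suc i)}}" "a \<in> L"
    then have e: "{a, b} \<in> glued" "{a, b} \<noteq> {Spine i, Spine (Suc i)}" by simp_all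
    show "b \<in> L"
    proof (cases a)
      case (Spine j)
      then show ?thesis using e ab(2) glued_Spine_iff[of j b] unfolding L_def by auto
    next
      case (Pendant j) then show ?thesis using e ab(2) glued_Pendant_iff[of j b] unfolding L_def
        by auto
    next
      case (Extra j) then show ?thesis using e ab(2) glued_Extra_iff[of j b] unfolding L_def by auto
    next
      case (Piece j z) then show ?thesis using e ab(2) glued_Piece_iff[of j z b] unfolding L_def
        by auto
    qed
  qed (use assms L_def in auto)
qed

lemma not_connected_minus_pendant_edge:
  assumes "i < m"
  shows "\<not> connected_in verts (glued - {{Spine i, Pendant i}})"
proof (rule not_connected_in_if_closed[of "Pendant i" _ "Spine i" "{Pendant i}"])
  fix a b assume "{a, b} \<in> glued - {{Spine i, Pendant i}}" "a \<in> {Pendant i}"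
  then have "{Pendant i, b} \<in> glued" "{Pendant i, b} \<noteq> {Pendant i, Spine i}"
    by (auto simp: insert_commute)
  then show "b \<in> {Pendant i}" using glued_Pendant_iff by simp
qed (use assms in auto)

lemma not_connected_minus_extra_edge:
  assumes "j < c"
  shows "\<not> connected_in verts (glued - {{Spine 0, Extra j}})"
proof (rule not_connected_in_if_closed[of "Extra j" _ "Spine 0" "{Extra j}"])
  fix a b assume "{a, b} \<in> glued - {{Spine 0, Extra j}}" "a \<in> {Extra j}"
  then have "{Extra j, b} \<in> glued" "{Extra j, b} \<noteq> {Extra j, Spine 0}"
    by (auto simp: insert_commute)
  then show "b \<in> {Extra j}" using glued_Extra_iff by simp
qed (use assms m_ge_2 in auto)

lemma not_connected_minus_root_edge:
  assumes "i < m"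
  shows "\<not> connected_in verts (glued - {{Spine i, Piece i (troot i)}})"
proof (rule not_connected_in_if_closed[of "Piece i (troot i)" _ "Spine i" "range (Piece i)"])
  fix a b assume ab: "{a, b} \<in> glued - {{Spine i, Piece i (troot i)}}" "a \<in> range (Piece i)"
  then obtain z where z: "a = Piece i z" by blast
  have "{Piece i z, b} \<in> glued" "{Piece i z, b} \<noteq> {Piece i (troot i), Spine i}"
    using ab z by (auto simp: insert_commute)
  then show "b \<in> range (Piece i)" using glued_Piece_iff[of i z b] by auto
qed (use assms troot_less in auto)

lemma not_connected_minus_piece_edge:
  assumes "i < m" "{x, y} \<in> tedges i"
  shows "\<not> connected_in verts (glued - {{Piece i x, Piece i y}})"
proof -
  let ?F = "tedges i - {{x, y}}"
  have "\<not> connected_in {..<k} ?F"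
    using is_tree_tedges[OF assms(1)] assms(2) unfolding is_tree_def connected_on_iff_connected_in
    by blast
  then obtain z0 where z0: "z0 < k" "(troot i, z0) \<notin> reach_avoiding ?F {}"
    using troot_less[OF assms(1)] by (auto elim: not_connected_in_unreachable)
  define Cr where "Cr = {z. (troot i, z) \<in> reach_avoiding ?F {}}"
  define L where "L = {v. \<forall>z. v = Piece i z \<longrightarrow> z \<in> Cr}"
  show ?thesis
  proof (rule not_connected_in_if_closed[of "Piece i (troot i)" _ "Piece i z0" L])
    show "Piece i (troot i) \<in> L" unfolding L_def Cr_def by simp
    show "Piece i z0 \<notin> L" unfolding L_def Cr_def using z0 by simp
    show "Piece i (troot i) \<in> verts" "Piece i z0 \<in> verts" using assms(1) troot_less z0 by auto
  next
    fix a b assume ab: "{a, b} \<in> glued - {{Piece i x, Piece i y}}" "a \<in> L"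
    have "z \<in> Cr" if bz: "b = Piece i z" for z
    proof -
      have "{Piece i z, a} \<in> glued" using ab bz by (simp add: insert_commute)
      then have "(z = troot i \<and> a = Spine i) \<or> (\<exists>y'. {z, y'} \<in> tedges i \<and> a = Piece i y')"
        using glued_Piece_iff[of i z a] by auto
      then show "z \<in> Cr"
      proof
        assume "\<exists>y'. {z, y'} \<in> tedges i \<and> a = Piece i y'"
        then obtain y' where y': "{z, y'} \<in> tedges i" "a = Piece i y'" by blast
        then have "y' \<in> Cr" using ab(2) unfolding L_def by blast
        have "{z, y'} \<noteq> {x, y}"
        proof
          assume "{z, y'} = {x, y}"
          then have "{Piece i z, Piece i y'} = {Piece i x, Piece i y}"
            by (metis image_empty image_insert)
          then show False using ab(1) bz y'(2) by (simp add: insert_commute)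
        qed
        then have "(y', z) \<in> adj_avoiding ?F {}" using y'
          by (simp add: adj_avoiding_def insert_commute)
        with \<open>y' \<in> Cr\<close> show "z \<in> Cr" unfolding Cr_def by (simp add: rtrancl_into_rtrancl)
      qed (simp add: Cr_def)
    qed
    then show "b \<in> L" unfolding L_def by simp
  qed
qed

lemma not_connected_minus_edge:
  assumes "e \<in> glued"
  shows "\<not> connected_in verts (glued - {e})"
proof -
  have "(\<exists>i. Suc i < m \<and> e = {Spine i, Spine (Suc i)}) \<or> (\<exists>i. i < m \<and> e = {Spine i, Pendant i}) \<or>
    (\<exists>i. i < m \<and> e = {Spine i, Piece i (troot i)}) \<or>
    (\<exists>i x y. i < m \<and> {x, y} \<in> tedges i \<and> e = {Piece i x, Piece i y}) \<or>
    (\<exists>j. j < c \<and> e = {Spine 0, Extra j})"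
    using assms unfolding glued_def by blast
  then show ?thesis
    using not_connected_minus_spine_edge not_connected_minus_pendant_edge
      not_connected_minus_root_edge not_connected_minus_piece_edge not_connected_minus_extra_edge
    by blast
qed

definition nbrs :: "vtx \<Rightarrow> vtx set" where "nbrs v = {u. {v, u} \<in> glued}"

lemma deg_glued: "deg glued v = card (nbrs v)"
  unfolding nbrs_def using glued_doubleton by (intro deg_eq_card_neighbours) blast

lemma finite_nbrs: "finite (nbrs v)"
proof -
  have "nbrs v \<subseteq> verts" unfolding nbrs_def using edges_onD(2)[OF edges_on_glued] by blast
  then show ?thesis using finite_verts finite_subset by blast
qed

lemma deg_Spine_0: "5 \<le> deg glued (Spine 0)"
proof -
  have "{Spine 1, Pendant 0, Piece 0 (troot 0), Extra 0, Extra 1} \<subseteq> nbrs (Spine 0)"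
    using m_ge_2 c_ge_2 by (simp add: nbrs_def glued_Spine_iff)
  moreover have "card {Spine 1, Pendant 0, Piece 0 (troot 0), Extra 0, Extra 1} = 5" by simp
  ultimately show ?thesis using card_mono[OF finite_nbrs] deg_glued by metis
qed

lemma deg_Spine: "0 < i \<Longrightarrow> deg glued (Spine i) \<le> 4"
proof -
  let ?N = "{Spine (Suc i), Spine (i - 1), Pendant i, Piece i (troot i)}"
  assume "0 < i"
  then have "nbrs (Spine i) \<subseteq> ?N" unfolding nbrs_def glued_Spine_iff by auto
  then have "card (nbrs (Spine i)) \<le> card ?N" by (rule card_mono[rotated]) simp
  then show ?thesis using card_le_4 deg_glued by (metis order_trans)
qed

lemma deg_Pendant: "i < m \<Longrightarrow> deg glued (Pendant i) = 1"
proof -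
  assume "i < m"
  then have "nbrs (Pendant i) = {Spine i}" unfolding nbrs_def using glued_Pendant_iff by auto
  then show ?thesis using deg_glued by simp
qed

lemma deg_Extra: "j < c \<Longrightarrow> deg glued (Extra j) = 1"
proof -
  assume "j < c"
  then have "nbrs (Extra j) = {Spine 0}" unfolding nbrs_def using glued_Extra_iff by auto
  then show ?thesis using deg_glued by simp
qed

lemma root_has_tree_neighbour: "i < m \<Longrightarrow> \<exists>z. {troot i, z} \<in> tedges i"
proof -
  assume i: "i < m"
  define y where "y = (if troot i = 0 then 1 else (0::nat))"
  have y: "y < k" "y \<noteq> troot i" unfolding y_def using k_ge_2 by auto
  have "connected_on k (tedges i)" using is_tree_tedges[OF i] unfolding is_tree_def by blast
  then have "(troot i, y) \<in> {(a, b). {a, b} \<in> tedges i}\<^sup>*"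
    using y troot_less[OF i] unfolding connected_on_def by blast
  then show ?thesis using y(2) by (cases rule: converse_rtranclE) auto
qed

lemma deg_root: "i < m \<Longrightarrow> 2 \<le> deg glued (Piece i (troot i))"
proof -
  assume i: "i < m"
  obtain z where "{troot i, z} \<in> tedges i" using root_has_tree_neighbour[OF i] by blast
  then have "{Spine i, Piece i z} \<subseteq> nbrs (Piece i (troot i))"
    unfolding nbrs_def using i glued_Piece_iff by auto
  moreover have "card {Spine i, Piece i z} = 2" by simp
  ultimately show ?thesis using card_mono[OF finite_nbrs] deg_glued by metis
qed

lemma deg_le: "v \<in> verts \<Longrightarrow> deg glued v \<le> k + c + 4"
proof (cases v)
  case (Spine i)
  let ?N = "{Spine (Suc i), Spine (i - 1), Pendant i, Piece i (troot i)}"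
  have "nbrs (Spine i) \<subseteq> ?N \<union> Extra ` {..<c}"
    unfolding nbrs_def using glued_Spine_iff[of i] by auto
  then have "card (nbrs (Spine i)) \<le> card (?N \<union> Extra ` {..<c})"
    by (rule card_mono[rotated]) simp
  also have "\<dots> \<le> card ?N + card (Extra ` {..<c})" by (rule card_Un_le)
  also have "\<dots> \<le> 4 + c" using card_le_4 card_image_le[of "{..<c}" Extra] by (simp add: add_mono)
  finally show ?thesis using Spine deg_glued by simp
next
  case (Piece i x)
  have "nbrs (Piece i x) \<subseteq> insert (Spine i) (Piece i ` {..<k})"
    unfolding nbrs_def using glued_Piece_iff[of i x] tedges_bounds by fastforce
  then have "card (nbrs (Piece i x)) \<le> card (insert (Spine i) (Piece i ` {..<k}))"
    by (rule card_mono[rotated]) simp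
  also have "\<dots> \<le> Suc (card (Piece i ` {..<k}))" by (simp add: card_insert_le_m1)
  also have "\<dots> \<le> Suc k" using card_image_le[of "{..<k}" "Piece i"] by simp
  finally show ?thesis using Piece deg_glued by simp
qed (simp_all add: deg_Pendant deg_Extra)

lemma branch_Spine_root: "i < m \<Longrightarrow> branch glued (Spine i) (Piece i (troot i)) = Piece i ` {..<k}"
proof
  assume i: "i < m"
  show "branch glued (Spine i) (Piece i (troot i)) \<subseteq> Piece i ` {..<k}"
  proof
    fix t assume "t \<in> branch glued (Spine i) (Piece i (troot i))"
    then have "(Piece i (troot i), t) \<in> reach_avoiding glued {Spine i}" unfolding branch_def by simp
    then show "t \<in> Piece i ` {..<k}"
    proof (rule rtrancl_closed)
      show "Piece i (troot i) \<in> Piece i ` {..<k}" using troot_less[OF i] by simp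
    next
      fix a b assume ab: "(a, b) \<in> adj_avoiding glued {Spine i}" "a \<in> Piece i ` {..<k}"
      then obtain z where "a = Piece i z" by blast
      with ab have "{Piece i z, b} \<in> glued" "b \<noteq> Spine i" by (simp_all add: adj_avoiding_def)
      then obtain y where "{z, y} \<in> tedges i" "b = Piece i y" using glued_Piece_iff[of i z b]
        by auto
      then show "b \<in> Piece i ` {..<k}" using tedges_bounds[OF i] by blast
    qed
  qed
  show "Piece i ` {..<k} \<subseteq> branch glued (Spine i) (Piece i (troot i))"
    using piece_reach[OF i troot_less[OF i]] unfolding branch_def by auto
qed

lemma card_Piece_image: "card (Piece i ` {..<k}) = k"
  by (simp add: card_image inj_on_def)

lemma finite_branch: "x \<in> verts \<Longrightarrow> finite (branch glued v x)"
  using branch_subset[OF edges_on_glued, of v x] finite_verts by (metis finite_insert finite_subset)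

lemma two_heavy_branches_Spine:
  assumes i: "i < m"
  shows "two_heavy_branches verts k glued (Spine i)"
proof -
  define j where "j = (if Suc i < m then Suc i else i - 1)"
  have j: "j < m" "j \<noteq> i" unfolding j_def using i m_ge_2 by auto
  have "Piece j ` {..<k} \<subseteq> branch glued (Spine i) (Piece j (troot j))"
    using piece_reach[OF j(1) troot_less[OF j(1)]] unfolding branch_def by auto
  moreover have "finite (branch glued (Spine i) (Piece j (troot j)))"
    using finite_branch troot_less j(1) by simp
  ultimately have "k \<le> card (branch glued (Spine i) (Piece j (troot j)))"
    using card_mono card_Piece_image by metis
  moreover have "k \<le> card (branch glued (Spine i) (Piece i (troot i)))"
    using branch_Spine_root[OF i] card_Piece_image by simp
  moreover have "(Piece i (troot i), Piece j (troot j)) \<notin> reach_avoiding glued {Spine i}"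
    using branch_Spine_root[OF i] j(2) unfolding branch_def by blast
  moreover have "Piece i (troot i) \<in> verts" "Piece j (troot j) \<in> verts"
    using i j(1) troot_less by simp_all
  moreover have "Piece i (troot i) \<noteq> Spine i" "Piece j (troot j) \<noteq> Spine i" "Spine i \<in> verts"
    using i by simp_all
  ultimately show ?thesis unfolding two_heavy_branches_def by blast
qed

lemma branch_inside_piece:
  assumes "j < m" "w < k" "z < k" "z \<noteq> w"
    and "(Piece j z, Piece j (troot j)) \<notin> reach_avoiding glued {Piece j w}"
  shows "branch glued (Piece j w) (Piece j z) \<subseteq> Piece j ` ({..<k} - {w})"
proof
  fix t assume "t \<in> branch glued (Piece j w) (Piece j z)"
  then have "(Piece j z, t) \<in> reach_avoiding glued {Piece j w}" unfolding branch_def by simp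
  then show "t \<in> Piece j ` ({..<k} - {w})"
  proof induction
    case (step t t')
    then obtain z' where z': "t = Piece j z'" "z' < k" "z' \<noteq> w" by blast
    with step.hyps(2) have e: "{Piece j z', t'} \<in> glued" "t' \<noteq> Piece j w"
      by (simp_all add: adj_avoiding_def)
    have "z' \<noteq> troot j" using step.hyps(1) z'(1) assms(5) by blast
    with e obtain y where "{z', y} \<in> tedges j" "t' = Piece j y"
      using glued_Piece_iff[of j z' t'] by auto
    then show ?case using tedges_bounds[OF assms(1)] e(2) by blast
  qed (use assms in auto)
qed

lemma heavy_branch_reaches_root:
  assumes "j < m" "w < k" "z < k" "z \<noteq> w" "k \<le> card (branch glued (Piece j w) (Piece j z))"
  shows "(Piece j z, Piece j (troot j)) \<in> reach_avoiding glued {Piece j w}"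
proof (rule ccontr)
  assume "\<not> ?thesis"
  then have "branch glued (Piece j w) (Piece j z) \<subseteq> Piece j ` ({..<k} - {w})"
    using branch_inside_piece assms(1-4) by blast
  then have "card (branch glued (Piece j w) (Piece j z)) \<le> card (Piece j ` ({..<k} - {w}))"
    by (rule card_mono[rotated]) simp
  also have "\<dots> \<le> card ({..<k} - {w})" by (rule card_image_le) simp
  also have "\<dots> < k" using assms(2) by simp
  finally show False using assms(5) by simp
qed

lemma heavy_branch_reaches_Spine_0:
  assumes v: "v \<in> verts" "\<forall>i. v \<noteq> Spine i" and x: "x \<in> verts" "x \<noteq> v"
    and heavy: "k \<le> card (branch glued v x)"
  shows "(x, Spine 0) \<in> reach_avoiding glued {v}"
proof -
  have no_spine: "\<forall>j. Spine j \<notin> {v}" using v by auto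
  show ?thesis
  proof (cases x)
    case (Spine i)
    then show ?thesis using x spine_reach[OF _ no_spine] by simp
  next
    case (Pendant i)
    then show ?thesis using x pendant_reach[OF _ _ no_spine] by simp
  next
    case (Extra j)
    then show ?thesis using x extra_reach[OF _ _ no_spine] by simp
  next
    case (Piece j z)
    show ?thesis
    proof (cases "\<exists>w. v = Piece j w")
      case False
      then have "\<forall>z. Piece j z \<notin> {v}" by auto
      then show ?thesis using Piece x piece_spine_reach[OF _ _ _ no_spine] by simp
    next
      case True
      then obtain w where w: "v = Piece j w" by blast
      have jz: "j < m" "w < k" "z < k" "z \<noteq> w" using Piece x v w by auto
      have to_root: "(x, Piece j (troot j)) \<in> reach_avoiding glued {v}"
        using heavy_branch_reaches_root[OF jz] heavy Piece w by simp
      also have "(Piece j (troot j), Spine j) \<in> reach_avoiding glued {v}"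
        using root_spine_reach[OF jz(1)] reach_avoiding_to_removed[OF to_root] x(2) no_spine
        by blast
      also have "(Spine j, Spine 0) \<in> reach_avoiding glued {v}"
        using spine_reach[OF jz(1) no_spine] .
      finally show ?thesis .
    qed
  qed
qed

lemma not_two_heavy_branches:
  assumes v: "v \<in> verts" "\<forall>i. v \<noteq> Spine i"
  shows "\<not> two_heavy_branches verts k glued v"
proof
  assume "two_heavy_branches verts k glued v"
  then obtain x y where xy: "x \<in> verts" "y \<in> verts" "x \<noteq> v" "y \<noteq> v" "k \<le> card (branch glued v x)"
    "k \<le> card (branch glued v y)" "(x, y) \<notin> reach_avoiding glued {v}"
    unfolding two_heavy_branches_def by blast
  have "(x, Spine 0) \<in> reach_avoiding glued {v}"
    using heavy_branch_reaches_Spine_0[OF v xy(1,3,5)] .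
  moreover have "(Spine 0, y) \<in> reach_avoiding glued {v}"
    using reach_avoiding_sym[OF heavy_branch_reaches_Spine_0[OF v xy(2,4,6)]] .
  ultimately show False using xy(7) by (meson rtrancl_trans)
qed

text \<open>This characterisation of the spine is invariant under isomorphism.\<close>

lemma two_heavy_branches_iff:
  "v \<in> verts \<Longrightarrow> two_heavy_branches verts k glued v \<longleftrightarrow> (\<exists>i<m. v = Spine i)"
  using two_heavy_branches_Spine not_two_heavy_branches by (cases v) auto

end

lemma mult_add_less_mult:
  assumes "i < m" "t < b" shows "i * b + t < m * (b::nat)"
proof -
  have "Suc i * b \<le> m * b" using assms(1) by (intro mult_right_mono) auto
  then show ?thesis using assms(2) by simp
qed

fun vtx_index :: "nat \<Rightarrow> nat \<Rightarrow> vtx \<Rightarrow> nat" where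
  "vtx_index b m (Spine i) = i * b"
| "vtx_index b m (Pendant i) = i * b + 1"
| "vtx_index b m (Piece i x) = i * b + (x + 2)"
| "vtx_index b m (Extra j) = m * b + j"

definition index_vtx :: "nat \<Rightarrow> nat \<Rightarrow> nat \<Rightarrow> vtx" where
  "index_vtx b m y =
     (if y < m * b then
        (if y mod b = 0 then Spine (y div b)
         else if y mod b = 1 then Pendant (y div b)
         else Piece (y div b) (y mod b - 2))
      else Extra (y - m * b))"

lemma index_vtx_block:
  assumes "i < m" "t < b"
  shows "index_vtx b m (i * b + t) =
    (if t = 0 then Spine i else if t = 1 then Pendant i else Piece i (t - 2))"
proof -
  have div_mod: "(i * b + t) div b = i" "(i * b + t) mod b = t" using assms(2) by simp_all
  show ?thesis unfolding index_vtx_def div_mod using mult_add_less_mult[OF assms] by simp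
qed

definition vtx_layout :: "nat \<Rightarrow> nat \<Rightarrow> nat \<Rightarrow> vtx set" where
  "vtx_layout b m c = Spine ` {..<m} \<union> Pendant ` {..<m} \<union>
     (\<lambda>(i, x). Piece i x) ` ({..<m} \<times> {..<b - 2}) \<union> Extra ` {..<c}"

lemma index_vtx_vtx_index:
  assumes "2 \<le> b" "v \<in> vtx_layout b m c"
  shows "index_vtx b m (vtx_index b m v) = v \<and> vtx_index b m v < m * b + c"
proof -
  consider (Spine) i where "i < m" "v = Spine i" | (Pendant) i where "i < m" "v = Pendant i"
    | (Piece) i x where "i < m" "x + 2 < b" "v = Piece i x" | (Extra) j where "j < c" "v = Extra j"
    using assms(2) unfolding vtx_layout_def by fastforce
  then show ?thesis
  proof cases
    case Spine
    then show ?thesis using index_vtx_block[of i m 0 b] mult_add_less_mult[of i m 0 b] assms(1)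
      by (auto intro: trans_less_add1)
  next
    case Pendant
    then show ?thesis using index_vtx_block[of i m 1 b] mult_add_less_mult[of i m 1 b] assms(1)
      by (auto intro: trans_less_add1)
  next
    case Piece
    then show ?thesis using index_vtx_block[of i m "x + 2" b] mult_add_less_mult[of i m "x + 2" b]
      by (auto intro: trans_less_add1)
  qed (simp_all add: index_vtx_def)
qed

lemma vtx_index_index_vtx:
  assumes "2 \<le> b" "y < m * b + c"
  shows "vtx_index b m (index_vtx b m y) = y \<and> index_vtx b m y \<in> vtx_layout b m c"
proof (cases "y < m * b")
  case True
  define i t where "i = y div b" and "t = y mod b"
  have "y = i * b + t" "i < m" "t < b"
    using True assms(1) unfolding i_def t_def by (simp_all add: div_less_iff_less_mult)
  then show ?thesis using index_vtx_block[of i m t b] unfolding vtx_layout_def by force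
next
  case False
  then show ?thesis using assms(2) by (auto simp: index_vtx_def vtx_layout_def)
qed

lemma bij_betw_vtx_index: "2 \<le> b \<Longrightarrow> bij_betw (vtx_index b m) (vtx_layout b m c) {..<m * b + c}"
  using index_vtx_vtx_index vtx_index_index_vtx
  by (intro bij_betw_byWitness[where f' = "index_vtx b m"]) (auto simp del: vtx_index.simps)

context spine_gluing
begin

definition nverts :: nat where "nverts = m * (k + 2) + c"

definition glued_tree :: "nat set set" where "glued_tree = relabel (vtx_index (k + 2) m) glued"

lemma bij_vtx_index: "bij_betw (vtx_index (k + 2) m) verts {..<nverts}"
proof -
  have "verts = vtx_layout (k + 2) m c" unfolding verts_def vtx_layout_def by simp
  then show ?thesis using bij_betw_vtx_index[of "k + 2" m c] unfolding nverts_def by simp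
qed

lemma is_tree_glued_tree: "is_tree nverts glued_tree"
  unfolding glued_tree_def
  by (rule is_tree_relabelI[OF bij_vtx_index edges_on_glued _ connected_glued
        not_connected_minus_edge])
    (use verts_simps(1)[of 0] m_ge_2 in force)

lemma degree_glued_tree: "v \<in> verts \<Longrightarrow> degree glued_tree (vtx_index (k + 2) m v) = deg glued v"
  unfolding degree_eq_deg glued_tree_def
  using deg_relabel[OF bij_betw_imp_inj_on[OF bij_vtx_index] edges_on_glued] by simp

lemma max_degree_glued_tree: "max_degree nverts glued_tree \<le> k + c + 4"
proof -
  have "degree glued_tree y \<le> k + c + 4" if "y < nverts" for y
  proof -
    obtain v where "v \<in> verts" "y = vtx_index (k + 2) m v"
      using bij_vtx_index \<open>y < nverts\<close> unfolding bij_betw_def by blast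
    then show ?thesis using degree_glued_tree deg_le by simp
  qed
  moreover have "0 < nverts" unfolding nverts_def using c_ge_2 by simp
  ultimately show ?thesis unfolding max_degree_def by (subst Max_le_iff) auto
qed

lemma card_leaves_glued_tree: "m + c \<le> card (leaves nverts glued_tree)"
proof -
  let ?L = "Pendant ` {..<m} \<union> Extra ` {..<c}"
  have L: "?L \<subseteq> verts" by auto
  have "vtx_index (k + 2) m ` ?L \<subseteq> leaves nverts glued_tree"
  proof
    fix y assume "y \<in> vtx_index (k + 2) m ` ?L"
    then obtain v where v: "v \<in> ?L" "y = vtx_index (k + 2) m v" by blast
    then have "v \<in> verts" "deg glued v = 1" using L deg_Pendant deg_Extra by auto
    then show "y \<in> leaves nverts glued_tree"
      unfolding leaves_def using v(2) degree_glued_tree bij_vtx_index bij_betwE by fastforce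
  qed
  then have "card (vtx_index (k + 2) m ` ?L) \<le> card (leaves nverts glued_tree)"
    by (rule card_mono[rotated]) (simp add: leaves_def)
  moreover have "card (vtx_index (k + 2) m ` ?L) = card ?L"
    using inj_on_subset[OF bij_betw_imp_inj_on[OF bij_vtx_index] L] by (rule card_image)
  moreover have "card ?L = m + c" by (subst card_Un_disjoint) (auto simp: card_image inj_on_def)
  ultimately show ?thesis by simp
qed

end

section \<open>Isomorphisms between glued trees\<close>

locale spine_gluing_iso = g1: spine_gluing k m c trees + g2: spine_gluing k m c trees'
  for k m c trees trees' +
  fixes h :: "vtx \<Rightarrow> vtx"
  assumes bij_h: "bij_betw h g1.verts g1.verts"
    and glued_h: "g2.glued = relabel h g1.glued"
begin

lemma inj_h: "inj_on h g1.verts"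
  using bij_h by (simp add: bij_betw_def)

lemma h_verts: "h ` g1.verts = g1.verts"
  using bij_h by (simp add: bij_betw_def)

lemma two_heavy_branches_h:
  "v \<in> g1.verts \<Longrightarrow>
    two_heavy_branches g1.verts k g2.glued (h v) \<longleftrightarrow> two_heavy_branches g1.verts k g1.glued v"
  using two_heavy_branches_relabel[OF inj_h g1.edges_on_glued, of v k] h_verts glued_h by simp

lemma deg_h: "v \<in> g1.verts \<Longrightarrow> deg g2.glued (h v) = deg g1.glued v"
  using deg_relabel[OF inj_h g1.edges_on_glued] glued_h by simp

lemma edge_h_iff:
  "a \<in> g1.verts \<Longrightarrow> b \<in> g1.verts \<Longrightarrow> {h a, h b} \<in> g2.glued \<longleftrightarrow> {a, b} \<in> g1.glued"
  using relabel_edge_iff[OF inj_h g1.edges_on_glued] glued_h by simp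

lemma branch_h:
  "v \<in> g1.verts \<Longrightarrow> x \<in> g1.verts \<Longrightarrow> branch g2.glued (h v) (h x) = h ` branch g1.glued v x"
  using branch_relabel[OF inj_h g1.edges_on_glued] glued_h by simp

lemma h_Spine_in_spine: "i < m \<Longrightarrow> \<exists>j<m. h (Spine i) = Spine j"
proof -
  assume i: "i < m"
  then have "h (Spine i) \<in> g1.verts" using h_verts by force
  moreover have "two_heavy_branches g1.verts k g2.glued (h (Spine i))"
    using g1.two_heavy_branches_Spine[OF i] two_heavy_branches_h i by simp
  ultimately show ?thesis using g2.two_heavy_branches_iff by blast
qed

text \<open>Only the first spine vertex has degree at least 5, and adjacency then propagates along the
  spine.\<close>
lemma h_Spine: "i < m \<Longrightarrow> h (Spine i) = Spine i"
proof (induction i rule: less_induct)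
  case (less i)
  obtain j where j: "j < m" "h (Spine i) = Spine j" using h_Spine_in_spine less.prems by blast
  show ?case
  proof (cases i)
    case 0
    have "5 \<le> deg g2.glued (h (Spine 0))" using deg_h g1.deg_Spine_0 g1.m_ge_2 by simp
    then have "\<not> 0 < j" using g2.deg_Spine j 0 by fastforce
    then show ?thesis using j 0 by simp
  next
    case (Suc i0)
    have IH: "h (Spine i0) = Spine i0" using less Suc by simp
    have "{Spine i0, Spine i} \<in> g1.glued" using g1.glued_Spine_iff less.prems Suc by simp
    then have "{Spine i0, Spine j} \<in> g2.glued"
      using edge_h_iff[of "Spine i0" "Spine i"] less.prems Suc IH j by simp
    then have "j = Suc i0 \<or> (\<exists>j0. i0 = Suc j0 \<and> j = j0)" using g2.glued_Spine_iff[of i0 "Spine j"]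
      by auto
    then show ?thesis
    proof
      assume "\<exists>j0. i0 = Suc j0 \<and> j = j0"
      then obtain j0 where j0: "i0 = Suc j0" "j = j0" by blast
      then have "h (Spine i) = h (Spine j0)" using less Suc j by simp
      then show ?thesis using inj_h less.prems j0 Suc by (simp add: inj_on_eq_iff)
    qed (use j Suc in simp)
  qed
qed

text \<open>The root of \<open>T\<^sub>i\<close> is the only neighbour of \<open>S\<^sub>i\<close> that is neither on the spine nor a
  leaf.\<close>
lemma h_root: "i < m \<Longrightarrow> h (Piece i (g1.troot i)) = Piece i (g2.troot i)"
proof -
  assume i: "i < m"
  let ?r = "h (Piece i (g1.troot i))"
  have r: "Piece i (g1.troot i) \<in> g1.verts" using i g1.troot_less by simp
  have "{Spine i, Piece i (g1.troot i)} \<in> g1.glued" using i g1.glued_Spine_iff by simp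
  then have "{Spine i, ?r} \<in> g2.glued" using edge_h_iff[of "Spine i"] i r h_Spine by fastforce
  then have cases: "(Suc i < m \<and> ?r = Spine (Suc i)) \<or> (\<exists>j. i = Suc j \<and> ?r = Spine j) \<or>
      ?r = Pendant i \<or> ?r = Piece i (g2.troot i) \<or> (i = 0 \<and> (\<exists>j<c. ?r = Extra j))"
    using g2.glued_Spine_iff[of i] by auto
  have "\<not> two_heavy_branches g1.verts k g2.glued ?r"
    using two_heavy_branches_h r g1.not_two_heavy_branches by simp
  then have "\<forall>j<m. ?r \<noteq> Spine j" using g2.two_heavy_branches_Spine by auto
  moreover have "2 \<le> deg g2.glued ?r" using deg_h r g1.deg_root i by simp
  then have "?r \<noteq> Pendant i" "\<forall>j<c. ?r \<noteq> Extra j" using g2.deg_Pendant g2.deg_Extra i by auto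
  ultimately show ?thesis using cases i by (auto dest: Suc_lessD)
qed

lemma h_piece: "i < m \<Longrightarrow> h ` Piece i ` {..<k} = Piece i ` {..<k}"
  using branch_h[of "Spine i" "Piece i (g1.troot i)"] h_Spine h_root
    g1.branch_Spine_root g2.branch_Spine_root g1.troot_less by simp

lemma piece_rooted_iso:
  assumes i: "i < m"
  shows "\<exists>g. bij_betw g {..<k} {..<k} \<and> g2.tedges i = relabel g (g1.tedges i) \<and>
    g (g1.troot i) = g2.troot i"
proof -
  define g where "g z = (THE y. h (Piece i z) = Piece i y)" for z
  have g: "h (Piece i z) = Piece i (g z)" "g z < k" if "z < k" for z
  proof -
    have "h (Piece i z) \<in> h ` Piece i ` {..<k}" using that by simp
    then obtain y where "h (Piece i z) = Piece i y" "y < k" unfolding h_piece[OF i] by blast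
    then show "h (Piece i z) = Piece i (g z)" "g z < k" unfolding g_def by simp_all
  qed
  have "inj_on g {..<k}"
  proof (rule inj_onI)
    fix x y assume xy: "x \<in> {..<k}" "y \<in> {..<k}" "g x = g y"
    then have "h (Piece i x) = h (Piece i y)" using g(1) by simp
    then show "x = y" using inj_h i xy(1,2) by (simp add: inj_on_eq_iff)
  qed
  moreover have "g ` {..<k} = {..<k}"
  proof
    show "{..<k} \<subseteq> g ` {..<k}"
    proof
      fix y assume "y \<in> {..<k}"
      then have "Piece i y \<in> h ` Piece i ` {..<k}" using h_piece[OF i] by simp
      then obtain z where "z < k" "Piece i y = h (Piece i z)" by auto
      then show "y \<in> g ` {..<k}" using g(1) by auto
    qed
  qed (use g(2) in auto)
  ultimately have bij: "bij_betw g {..<k} {..<k}" unfolding bij_betw_def by blast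
  have "{g x, g y} \<in> g2.tedges i \<longleftrightarrow> {x, y} \<in> g1.tedges i" if "x \<in> {..<k}" "y \<in> {..<k}" for x y
    using edge_h_iff[of "Piece i x" "Piece i y"] g[of x] g[of y] that i
    by (simp add: g1.glued_Piece_Piece_iff g2.glued_Piece_Piece_iff)
  then have "g2.tedges i = relabel g (g1.tedges i)"
    using g1.is_tree_tedges[OF i] g2.is_tree_tedges[OF i] unfolding is_tree_def
    by (intro relabel_eqI[OF bij] edges_on_if_subset_vpairs) auto
  moreover have "g (g1.troot i) = g2.troot i" using g(1)[OF g1.troot_less[OF i]] h_root[OF i]
    by simp
  ultimately show ?thesis using bij by blast
qed

end

lemma glued_tree_iso_pieces:
  assumes T: "spine_gluing k m c T" and T': "spine_gluing k m c T'"
    and f: "bij_betw f {..<spine_gluing.nverts k m c} {..<spine_gluing.nverts k m c}"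
    and iso: "spine_gluing.glued_tree k m c T' = relabel f (spine_gluing.glued_tree k m c T)"
    and i: "i < m"
  shows "\<exists>g. bij_betw g {..<k} {..<k} \<and> fst (T' i) = relabel g (fst (T i)) \<and>
    g (snd (T i)) = snd (T' i)"
proof -
  interpret g1: spine_gluing k m c T by (rule T)
  interpret g2: spine_gluing k m c T' by (rule T')
  let ?idx = "vtx_index (k + 2) m"
  let ?inv = "inv_into g1.verts ?idx"
  define h where "h = ?inv \<circ> f \<circ> ?idx"
  have "bij_betw h g1.verts g1.verts"
    unfolding h_def using g1.bij_vtx_index f bij_betw_inv_into[OF g1.bij_vtx_index]
    by (blast intro: bij_betw_trans)
  moreover have "g2.glued = relabel h g1.glued"
  proof -
    have "g2.glued = relabel ?inv (relabel ?idx g2.glued)"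
      using relabel_inv_into[OF bij_betw_imp_inj_on[OF g1.bij_vtx_index] g2.edges_on_glued] by simp
    also have "\<dots> = relabel h g1.glued"
      using iso unfolding g1.glued_tree_def g2.glued_tree_def h_def
        by (simp add: relabel_comp comp_assoc)
    finally show ?thesis .
  qed
  ultimately interpret spine_gluing_iso k m c T T' h
    by unfold_locales
  show ?thesis using piece_rooted_iso[OF i] by blast
qed

section \<open>Counting\<close>

definition rooted_trees_on :: "nat \<Rightarrow> (nat set set \<times> nat) set" where
  "rooted_trees_on k = {(E, r). is_tree k E \<and> r < k}"

lemma rooted_isoI:
  assumes "(E, r) \<in> A" "(E', r') \<in> A" "bij_betw f {..<k} {..<k}" "E' = relabel f E" "f r = r'"
  shows "((E, r), (E', r')) \<in> rooted_iso k A"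
  using assms unfolding rooted_iso_def relabel_def by blast

lemma rooted_isoE:
  assumes "((E, r), (E', r')) \<in> rooted_iso k A"
  obtains f where "(E, r) \<in> A" "(E', r') \<in> A" "bij_betw f {..<k} {..<k}"
    "E' = relabel f E" "f r = r'"
  using assms unfolding rooted_iso_def relabel_def by blast

lemma equiv_rooted_iso: "equiv (rooted_trees_on k) (rooted_iso k (rooted_trees_on k))"
proof (rule equivI)
  let ?A = "rooted_trees_on k"
  show "rooted_iso k ?A \<subseteq> ?A \<times> ?A" unfolding rooted_iso_def by auto
  show "refl_on ?A (rooted_iso k ?A)"
    by (rule refl_onI) (auto intro: rooted_isoI[where f = id] simp: relabel_id)
  show "sym (rooted_iso k ?A)"
  proof (rule symI)
    fix x y assume "(x, y) \<in> rooted_iso k ?A"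
    moreover obtain E r E' r' where xy: "x = (E, r)" "y = (E', r')" by fastforce
    ultimately obtain f where f: "(E, r) \<in> ?A" "(E', r') \<in> ?A" "bij_betw f {..<k} {..<k}"
      "E' = relabel f E" "f r = r'"
      by (auto elim: rooted_isoE)
    have "edges_on {..<k} E"
      using f(1) edges_on_if_subset_vpairs unfolding rooted_trees_on_def is_tree_def by blast
    then have "E = relabel (inv_into {..<k} f) E'"
      using relabel_inv_into[OF bij_betw_imp_inj_on[OF f(3)]] f(4) by simp
    moreover have "inv_into {..<k} f r' = r"
      using f(1,3,5) unfolding rooted_trees_on_def by (auto simp: bij_betw_def)
    ultimately show "(y, x) \<in> rooted_iso k ?A"
      using f(1,2) bij_betw_inv_into[OF f(3)] xy by (auto intro: rooted_isoI)
  qed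
  show "trans (rooted_iso k ?A)"
  proof (rule transI)
    fix x y z assume "(x, y) \<in> rooted_iso k ?A" "(y, z) \<in> rooted_iso k ?A"
    moreover obtain E r E' r' E'' r'' where xyz: "x = (E, r)" "y = (E', r')" "z = (E'', r'')"
      by (metis surj_pair)
    ultimately obtain f g
      where f: "(E, r) \<in> ?A" "bij_betw f {..<k} {..<k}" "E' = relabel f E" "f r = r'"
      and g: "(E'', r'') \<in> ?A" "bij_betw g {..<k} {..<k}" "E'' = relabel g E'" "g r' = r''"
      by (auto elim!: rooted_isoE)
    then show "(x, z) \<in> rooted_iso k ?A"
      using xyz bij_betw_trans[OF f(2) g(2)]
      by (auto intro!: rooted_isoI[where f = "g \<circ> f"] simp: relabel_comp)
  qed
qed

lemma finite_vpairs: "finite (vpairs n)"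
proof -
  have "vpairs n \<subseteq> Pow {..<n}" unfolding vpairs_def by auto
  then show ?thesis by (rule finite_subset) simp
qed

lemma finite_trees: "finite {E. is_tree n E \<and> P E}"
  by (rule finite_subset[of _ "Pow (vpairs n)"]) (auto simp: is_tree_def finite_vpairs)

lemma finite_rooted_trees_on: "finite (rooted_trees_on k)"
  by (rule finite_subset[of _ "Pow (vpairs k) \<times> {..<k}"])
    (auto simp: rooted_trees_on_def is_tree_def finite_vpairs)

lemma card_quotient_power_le:
  assumes R: "equiv A R" and "finite A" and "finite B" and "S \<subseteq> B \<times> B"
    and refl: "\<And>b. b \<in> B \<Longrightarrow> (b, b) \<in> S"
    and F: "\<And>xs. set xs \<subseteq> A \<Longrightarrow> length xs = m \<Longrightarrow> F xs \<in> B"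
    and F_reflects: "\<And>xs ys i. set xs \<subseteq> A \<Longrightarrow> length xs = m \<Longrightarrow> set ys \<subseteq> A \<Longrightarrow> length ys = m \<Longrightarrow>
      (F xs, F ys) \<in> S \<Longrightarrow> i < m \<Longrightarrow> (xs ! i, ys ! i) \<in> R"
  shows "card (A // R) ^ m \<le> card (B // S)"
proof -
  define rep where "rep C = (SOME x. x \<in> C)" for C :: "'a set"
  have rep: "rep C \<in> C" if "C \<in> A // R" for C
    using in_quotient_imp_non_empty[OF R that] unfolding rep_def by (simp add: some_in_eq)
  have rep_A: "set (map rep Cs) \<subseteq> A" if "set Cs \<subseteq> A // R" for Cs
    using that rep in_quotient_imp_subset[OF R] by auto
  let ?Ls = "{Cs. set Cs \<subseteq> A // R \<and> length Cs = m}"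
  define \<Phi> where "\<Phi> Cs = S `` {F (map rep Cs)}" for Cs
  have image: "\<Phi> ` ?Ls \<subseteq> B // S" unfolding \<Phi>_def using F rep_A by (auto intro: quotientI)
  have inj: "inj_on \<Phi> ?Ls"
  proof (rule inj_onI)
    fix Cs Ds assume Cs: "Cs \<in> ?Ls" and Ds: "Ds \<in> ?Ls" and eq: "\<Phi> Cs = \<Phi> Ds"
    have "S `` {F (map rep Cs)} = S `` {F (map rep Ds)}" using eq by (simp add: \<Phi>_def)
    moreover have "(F (map rep Ds), F (map rep Ds)) \<in> S" using refl F rep_A Ds by auto
    ultimately have "(F (map rep Cs), F (map rep Ds)) \<in> S" by (metis Image_singleton_iff)
    then have "(rep (Cs ! i), rep (Ds ! i)) \<in> R" if "i < m" for i
      using F_reflects[of "map rep Cs" "map rep Ds" i] rep_A Cs Ds that by auto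
    then have "Cs ! i = Ds ! i" if "i < m" for i
      using that Cs Ds quotient_eq_iff[OF R _ _ rep rep] by (simp add: subset_code(1))
    then show "Cs = Ds" using Cs Ds by (simp add: nth_equalityI)
  qed
  have "card ?Ls = card (\<Phi> ` ?Ls)" using card_image[OF inj] by simp
  also have "\<dots> \<le> card (B // S)" using finite_quotient[OF assms(3,4)] image by (rule card_mono)
  finally have "card ?Ls \<le> card (B // S)" .
  moreover have "card ?Ls = card (A // R) ^ m"
    using finite_quotient[OF assms(2)] R by (simp add: card_lists_length_eq equiv_type)
  ultimately show ?thesis by simp
qed

lemma rooted_trees_power_le_unlabelled_trees:
  assumes "2 \<le> k" "2 \<le> m" "2 \<le> c" "n = m * (k + 2) + c"
    and P: "\<And>E. is_tree n E \<Longrightarrow> max_degree n E \<le> k + c + 4 \<Longrightarrow> m + c \<le> card (leaves n E) \<Longrightarrow> P E"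
  shows "rooted_trees k ^ m \<le> unlabelled_trees n P"
proof -
  let ?A = "rooted_trees_on k" and ?B = "{E. is_tree n E \<and> P E}"
  have gluing: "spine_gluing k m c (nth xs)" if "set xs \<subseteq> ?A" "length xs = m" for xs
  proof
    fix i assume "i < m"
    then have "xs ! i \<in> ?A" using that nth_mem by blast
    then show "is_tree k (fst (xs ! i))" "snd (xs ! i) < k" unfolding rooted_trees_on_def by auto
  qed (use assms(1-3) in simp_all)
  have n: "spine_gluing.nverts k m c = n" if "set xs \<subseteq> ?A" "length xs = m" for xs
    using spine_gluing.nverts_def[OF gluing[OF that]] assms(4) by simp
  have "card (?A // rooted_iso k ?A) ^ m \<le> card (?B // graph_iso n ?B)"
  proof (rule card_quotient_power_le[OF equiv_rooted_iso finite_rooted_trees_on finite_trees,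
        where F = "\<lambda>xs. spine_gluing.glued_tree k m c (nth xs)"])
    show "graph_iso n ?B \<subseteq> ?B \<times> ?B" unfolding graph_iso_def by auto
    show "(E, E) \<in> graph_iso n ?B" if "E \<in> ?B" for E
      using that unfolding graph_iso_def by (auto intro!: exI[of _ id])
  next
    fix xs assume xs: "set xs \<subseteq> ?A" "length xs = m"
    interpret spine_gluing k m c "nth xs" using gluing[OF xs] .
    show "glued_tree \<in> ?B"
      using P is_tree_glued_tree max_degree_glued_tree card_leaves_glued_tree n[OF xs] by simp
  next
    fix xs ys i assume xs: "set xs \<subseteq> ?A" "length xs = m" and ys: "set ys \<subseteq> ?A" "length ys = m"
      and iso: "(spine_gluing.glued_tree k m c (nth xs), spine_gluing.glued_tree k m c (nth ys))
        \<in> graph_iso n ?B"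
      and i: "i < m"
    then obtain f where "bij_betw f {..<n} {..<n}"
      "spine_gluing.glued_tree k m c (nth ys) = relabel f (spine_gluing.glued_tree k m c (nth xs))"
      unfolding graph_iso_def relabel_def by blast
    then obtain g where "bij_betw g {..<k} {..<k}" "fst (ys ! i) = relabel g (fst (xs ! i))"
        "g (snd (xs ! i)) = snd (ys ! i)"
      using glued_tree_iso_pieces[OF gluing[OF xs] gluing[OF ys] _ _ i] n[OF xs] by metis
    moreover have "xs ! i \<in> ?A" "ys ! i \<in> ?A" using xs ys i nth_mem by (metis subsetD)+
    ultimately show "(xs ! i, ys ! i) \<in> rooted_iso k ?A"
      by (metis prod.collapse rooted_isoI)
  qed
  then show ?thesis
    unfolding rooted_trees_def unlabelled_trees_def rooted_trees_on_def Let_def by simp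
qed

section \<open>Asymptotics\<close>

lemma power_le_power_blocks:
  fixes \<gamma> \<beta> :: real
  assumes "0 < \<gamma>" "\<gamma> < \<beta>" "\<gamma> ^ 3 < (\<beta> / \<gamma>) ^ k" "n = m * (k + 2) + c" "c \<le> m"
  shows "\<gamma> ^ n \<le> \<beta> ^ (k * m)"
proof (cases "\<gamma> \<le> 1")
  case True
  have "\<gamma> ^ n \<le> \<gamma> ^ (k * m)" using True assms(1,4)
    by (intro power_decreasing) (auto simp: algebra_simps)
  also have "\<dots> \<le> \<beta> ^ (k * m)" using assms(1,2) by (intro power_mono) auto
  finally show ?thesis .
next
  case False
  have "n = k * m + (2 * m + c)" using assms(4) by (simp add: algebra_simps)
  then have "\<gamma> ^ n = \<gamma> ^ (k * m) * \<gamma> ^ (2 * m + c)" by (simp add: power_add)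
  also have "\<dots> \<le> \<gamma> ^ (k * m) * (\<gamma> ^ 3) ^ m"
    using False assms(1,5)
      by (intro mult_left_mono) (auto simp: power_mult[symmetric] intro: power_increasing)
  also have "\<dots> \<le> \<gamma> ^ (k * m) * ((\<beta> / \<gamma>) ^ k) ^ m"
    using assms(1,3) by (intro mult_left_mono power_mono) auto
  also have "\<dots> = \<beta> ^ (k * m)"
    using assms(1) by (simp add: power_mult power_mult_distrib[symmetric])
  finally show ?thesis .
qed

lemma exists_block_size:
  fixes \<alpha> \<beta> \<gamma> :: real
  assumes "(\<lambda>k. root k (real (rooted_trees k))) \<longlonglongrightarrow> \<alpha>" "0 < \<gamma>" "\<gamma> < \<beta>" "\<beta> < \<alpha>"
  obtains k where "2 \<le> k" "\<beta> ^ k \<le> real (rooted_trees k)" "\<gamma> ^ 3 < (\<beta> / \<gamma>) ^ k"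
proof -
  have "1 < \<beta> / \<gamma>" using assms(2,3) by simp
  then obtain N where N: "\<gamma> ^ 3 < (\<beta> / \<gamma>) ^ N" using real_arch_pow by blast
  have "\<forall>\<^sub>F k in sequentially. \<gamma> ^ 3 < (\<beta> / \<gamma>) ^ k"
  proof (rule eventually_sequentiallyI)
    fix k assume "N \<le> k"
    then have "(\<beta> / \<gamma>) ^ N \<le> (\<beta> / \<gamma>) ^ k" using \<open>1 < \<beta> / \<gamma>\<close> by (intro power_increasing) auto
    then show "\<gamma> ^ 3 < (\<beta> / \<gamma>) ^ k" using N by linarith
  qed
  moreover have "\<forall>\<^sub>F k in sequentially. \<beta> < root k (real (rooted_trees k))"
    using order_tendstoD(1)[OF assms(1,4)] .
  ultimately obtain k where k: "2 \<le> k" "\<beta> < root k (real (rooted_trees k))" "\<gamma> ^ 3 < (\<beta> / \<gamma>) ^ k"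
    using eventually_ge_at_top[of 2]
      by (metis (mono_tags, lifting) eventually_sequentially eventually_conj_iff order.refl)
  have "\<beta> ^ k \<le> root k (real (rooted_trees k)) ^ k" using k(2) assms(2,3) by (intro power_mono) auto
  also have "\<dots> = real (rooted_trees k)" using k(1) by (simp add: real_root_pow_pos2)
  finally show thesis using that k(1,3) by blast
qed

lemma block_decomposition:
  assumes "(k + 3) * (k + 2) + 2 \<le> (n::nat)"
  obtains m c where "n = m * (k + 2) + c" "2 \<le> c" "c \<le> k + 3" "k + 3 \<le> m"
proof
  let ?m = "(n - 2) div (k + 2)" and ?c = "(n - 2) mod (k + 2) + 2"
  show "n = ?m * (k + 2) + ?c" using assms div_mult_mod_eq[of "n - 2" "k + 2"] by linarith
  show "2 \<le> ?c" "?c \<le> k + 3" by simp_all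
  have "(k + 3) * (k + 2) div (k + 2) \<le> ?m" using assms by (intro div_le_mono) linarith
  moreover have "(k + 3) * (k + 2) div (k + 2) = k + 3" by (rule nonzero_mult_div_cancel_right) simp
  ultimately show "k + 3 \<le> ?m" by simp
qed

lemma power_le_unlabelled_trees:
  fixes \<gamma> \<beta> :: real
  assumes k: "2 \<le> k" "\<beta> ^ k \<le> real (rooted_trees k)" "\<gamma> ^ 3 < (\<beta> / \<gamma>) ^ k"
    and "0 < \<gamma>" "\<gamma> < \<beta>" and n: "(k + 3) * (k + 2) + 2 \<le> n"
  shows "\<gamma> ^ n \<le> real (unlabelled_trees n (\<lambda>E. max_degree n E \<le> 2 * k + 8 \<and>
    real (card (leaves n E)) \<ge> 1 / real (k + 2) * real n))" (is "_ \<le> real (unlabelled_trees n ?P)")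
proof -
  obtain m c where mc: "n = m * (k + 2) + c" "2 \<le> c" "c \<le> k + 3" "k + 3 \<le> m"
    using block_decomposition[OF n] .
  have "rooted_trees k ^ m \<le> unlabelled_trees n ?P"
  proof (rule rooted_trees_power_le_unlabelled_trees[OF k(1) _ mc(2,1)])
    fix E assume E: "max_degree n E \<le> k + c + 4" "m + c \<le> card (leaves n E)"
    have "n \<le> (m + c) * (k + 2)" using mc(1) by (simp add: algebra_simps)
    then have "real n \<le> real (m + c) * real (k + 2)" by (metis of_nat_mono of_nat_mult)
    then have "1 / real (k + 2) * real n \<le> real (m + c)" by (simp add: field_simps)
    also have "\<dots> \<le> real (card (leaves n E))" using E(2) by simp
    finally show "?P E" using E(1) mc(3) by simp
  qed (use mc(4) in simp)
  then have "real (rooted_trees k) ^ m \<le> real (unlabelled_trees n ?P)"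
    using of_nat_mono by fastforce
  moreover have "\<gamma> ^ n \<le> (\<beta> ^ k) ^ m"
    using power_le_power_blocks[OF assms(4,5) k(3) mc(1)] mc(3,4) by (simp add: power_mult)
  moreover have "(\<beta> ^ k) ^ m \<le> real (rooted_trees k) ^ m"
    using k(2) assms(4,5) by (intro power_mono) auto
  ultimately show ?thesis by linarith
qed

theorem lemma2p3:
  fixes \<alpha> \<epsilon> :: real
  assumes otter: "(\<lambda>k. root k (real (rooted_trees k))) \<longlonglongrightarrow> \<alpha>"
    and "0 < \<epsilon>" and "\<epsilon> < \<alpha>"
  shows "\<exists>\<Delta>::nat. \<exists>\<rho>::real. \<rho> > 0 \<and>
           (\<forall>\<^sub>F n in sequentially.
              real (unlabelled_trees n
                 (\<lambda>E. max_degree n E \<le> \<Delta> \<and> real (card (leaves n E)) \<ge> \<rho> * real n))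
              \<ge> (\<alpha> - \<epsilon>) ^ n)"
proof -
  have "0 < \<alpha> - \<epsilon>" "\<alpha> - \<epsilon> < \<alpha> - \<epsilon> / 2" "\<alpha> - \<epsilon> / 2 < \<alpha>"
    using assms(2,3) by simp_all
  then obtain k where k: "2 \<le> k" "(\<alpha> - \<epsilon> / 2) ^ k \<le> real (rooted_trees k)"
      "(\<alpha> - \<epsilon>) ^ 3 < ((\<alpha> - \<epsilon> / 2) / (\<alpha> - \<epsilon>)) ^ k"
    by (rule exists_block_size[OF otter])
  have "\<forall>\<^sub>F n in sequentially. (\<alpha> - \<epsilon>) ^ n \<le> real (unlabelled_trees n
      (\<lambda>E. max_degree n E \<le> 2 * k + 8 \<and> real (card (leaves n E)) \<ge> 1 / real (k + 2) * real n))"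
    using power_le_unlabelled_trees[OF k] \<open>0 < \<alpha> - \<epsilon>\<close> \<open>\<alpha> - \<epsilon> < \<alpha> - \<epsilon> / 2\<close>
    by (intro eventually_sequentiallyI) blast
  moreover have "1 / real (k + 2) > 0" by simp
  ultimately show ?thesis by blast
qed

end
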